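(* Let $n$ be a positive integer and $r$ an integer with $0\le r\le \lceil n/2\rceil$, and let $d_\star=d_\star(r,n)$ be an integer maximising $q_n^{r,d}$ over all integers $d$. Then either \[ d_\star = \left\lceil \frac{(n-2r)^2+2n-5r-1}{n-r+3}\right\rceil \quad\text{or}\quad d_\star = \frac{(n-2r)^2+2n-5r-1}{n-r+3}+1. \]
   Context: $Q(P_n)$ is the family of subsets of $[n]$ containing no two consecutive integers, and $Q^{(r)}(P_n)$ its members of size $r$. The out-degree $d^+(A)$ of $A\in Q(P_n)$ is the number of $b\in[n]\setminus A$ with $A\cup\{b\}\in Q(P_n)$. $q_n^{r,d}$ is the number of $A\in Q^{(r)}(P_n)$ with $d^+(A)=d$. *)

theory Defs
  imports Complex_Main
begin

definition indep_path :: "nat \<Rightarrow> nat set set" where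
  "indep_path n = {A. A \<subseteq> {1..n} \<and> (\<forall>i\<in>A. Suc i \<notin> A)}"

definition outdeg :: "nat \<Rightarrow> nat set \<Rightarrow> nat" where
  "outdeg n A = card {b \<in> {1..n} - A. insert b A \<in> indep_path n}"

definition qcount :: "nat \<Rightarrow> nat \<Rightarrow> int \<Rightarrow> nat" where
  "qcount n r d = card {A \<in> indep_path n. card A = r \<and> int (outdeg n A) = d}"

end

theory Submission
  imports Defs
begin

text \<open>Splitting the independent \<open>r\<close>-sets of \<open>P\<^sub>n\<close> according to whether they contain the
  last vertex gives recurrences in \<open>n\<close> whose solution is
  \<open>qcount n r d = C(r+1, m-d) C(m-1, d)\<close> with \<open>m = n+1-2r\<close> (for \<open>m = 0\<close> only \<open>d = 0\<close> occurs).
  In \<open>k = m - d\<close> this is \<open>C(a, k) C(b, b+1-k)\<close> with \<open>a = r+1\<close>, \<open>b = m-1\<close>, and comparing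
  consecutive terms shows that a maximiser satisfies \<open>(k-1)(a+b+2) \<le> a(b+1) \<le> k(a+b+2)\<close>.
  Back in terms of \<open>d\<close> this reads \<open>X \<le> d D \<le> X + D\<close> where \<open>X/D\<close> is the fraction in the
  statement, which leaves only \<open>d = \<lceil>X/D\<rceil>\<close> and \<open>d = X/D + 1\<close>.\<close>

definition free_vertices :: "nat \<Rightarrow> nat set \<Rightarrow> nat set" where
  "free_vertices n A = {b \<in> {1..n}. b \<notin> A \<and> Suc b \<notin> A \<and> (\<forall>i\<in>A. Suc i \<noteq> b)}"

lemma finite_indep_path: "finite (indep_path n)"
  by (rule finite_subset[of _ "Pow {1..n}"]) (auto simp: indep_path_def)

lemma outdeg_eq_card_free_vertices:
  "A \<in> indep_path n \<Longrightarrow> outdeg n A = card (free_vertices n A)"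
  unfolding outdeg_def free_vertices_def indep_path_def
  by (rule arg_cong[where f = card]) auto

lemma outdeg_Suc:
  assumes "A \<in> indep_path n"
  shows "outdeg (Suc n) A = outdeg n A + (if n \<in> A then 0 else 1)"
proof -
  have A': "A \<in> indep_path (Suc n)"
    using assms by (auto simp: indep_path_def)
  have "free_vertices (Suc n) A = free_vertices n A \<union> (if n \<in> A then {} else {Suc n})"
    using assms unfolding free_vertices_def indep_path_def by (auto simp: le_Suc_eq)
  moreover have "Suc n \<notin> free_vertices n A" "finite (free_vertices n A)"
    by (auto simp: free_vertices_def)
  ultimately show ?thesis
    using outdeg_eq_card_free_vertices[OF assms] outdeg_eq_card_free_vertices[OF A'] by auto
qed

lemma indep_path_Suc_without_last: "{A \<in> indep_path (Suc n). Suc n \<notin> A} = indep_path n"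
  unfolding indep_path_def by (auto simp: le_Suc_eq subset_iff)

lemma indep_path_Suc_Suc_with_last:
  "{A \<in> indep_path (Suc (Suc n)). Suc (Suc n) \<in> A} = insert (Suc (Suc n)) ` indep_path n"
proof (intro equalityI subsetI)
  fix A assume "A \<in> {A \<in> indep_path (Suc (Suc n)). Suc (Suc n) \<in> A}"
  hence A: "A \<subseteq> {1..Suc (Suc n)}" "\<forall>i\<in>A. Suc i \<notin> A" "Suc (Suc n) \<in> A"
    by (auto simp: indep_path_def)
  hence "A - {Suc (Suc n)} \<in> indep_path n"
    by (auto simp: indep_path_def subset_iff le_Suc_eq)
  moreover have "A = insert (Suc (Suc n)) (A - {Suc (Suc n)})"
    using A by auto
  ultimately show "A \<in> insert (Suc (Suc n)) ` indep_path n" by blast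
qed (auto simp: indep_path_def)

lemma outdeg_insert_last:
  assumes "B \<in> indep_path n"
  shows "outdeg (Suc (Suc n)) (insert (Suc (Suc n)) B) = outdeg n B"
proof -
  have B': "insert (Suc (Suc n)) B \<in> indep_path (Suc (Suc n))"
    using indep_path_Suc_Suc_with_last[of n] assms by blast
  have "free_vertices (Suc (Suc n)) (insert (Suc (Suc n)) B) = free_vertices n B"
    using assms unfolding free_vertices_def indep_path_def by (auto simp: subset_iff le_Suc_eq)
  thus ?thesis
    using outdeg_eq_card_free_vertices[OF assms] outdeg_eq_card_free_vertices[OF B'] by simp
qed

definition qcount_excl :: "nat \<Rightarrow> nat \<Rightarrow> int \<Rightarrow> nat" where
  "qcount_excl n r d = card {A \<in> indep_path n. card A = r \<and> int (outdeg n A) = d \<and> n \<notin> A}"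

definition qcount_incl :: "nat \<Rightarrow> nat \<Rightarrow> int \<Rightarrow> nat" where
  "qcount_incl n r d = card {A \<in> indep_path n. card A = r \<and> int (outdeg n A) = d \<and> n \<in> A}"

lemma qcount_eq_excl_plus_incl: "qcount n r d = qcount_excl n r d + qcount_incl n r d"
proof -
  have "{A \<in> indep_path n. card A = r \<and> int (outdeg n A) = d}
      = {A \<in> indep_path n. card A = r \<and> int (outdeg n A) = d \<and> n \<notin> A}
      \<union> {A \<in> indep_path n. card A = r \<and> int (outdeg n A) = d \<and> n \<in> A}"
    by blast
  thus ?thesis
    unfolding qcount_def qcount_excl_def qcount_incl_def
    by (simp add: card_Un_disjoint finite_indep_path disjoint_iff)
qed

lemma qcount_excl_Suc: "qcount_excl (Suc n) r d = qcount_excl n r (d - 1) + qcount_incl n r d"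
proof -
  have "{A \<in> indep_path (Suc n). card A = r \<and> int (outdeg (Suc n) A) = d \<and> Suc n \<notin> A}
      = {A \<in> indep_path n. card A = r \<and> int (outdeg (Suc n) A) = d}"
    using indep_path_Suc_without_last[of n] by blast
  also have "\<dots> = {A \<in> indep_path n. card A = r \<and> int (outdeg n A) = d - 1 \<and> n \<notin> A}
      \<union> {A \<in> indep_path n. card A = r \<and> int (outdeg n A) = d \<and> n \<in> A}"
    using outdeg_Suc[of _ n] by (auto split: if_splits)
  finally show ?thesis
    unfolding qcount_excl_def qcount_incl_def
    by (simp add: card_Un_disjoint finite_indep_path disjoint_iff)
qed

lemma qcount_incl_Suc_Suc:
  "qcount_incl (Suc (Suc n)) r d = (if r = 0 then 0 else qcount n (r - 1) d)"
proof -
  let ?S = "{B \<in> indep_path n. Suc (card B) = r \<and> int (outdeg n B) = d}"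
  have last_notin: "Suc (Suc n) \<notin> B" and fin: "finite B" if "B \<in> indep_path n" for B
    using that by (auto simp: indep_path_def intro: finite_subset)
  have "{A \<in> indep_path (Suc (Suc n)). card A = r \<and> int (outdeg (Suc (Suc n)) A) = d
          \<and> Suc (Suc n) \<in> A}
      = {A \<in> insert (Suc (Suc n)) ` indep_path n. card A = r \<and> int (outdeg (Suc (Suc n)) A) = d}"
    using indep_path_Suc_Suc_with_last[of n] by blast
  also have "\<dots> = insert (Suc (Suc n)) ` ?S"
    using outdeg_insert_last last_notin fin by (auto simp: image_iff)
  finally have "{A \<in> indep_path (Suc (Suc n)). card A = r \<and> int (outdeg (Suc (Suc n)) A) = d
          \<and> Suc (Suc n) \<in> A} = insert (Suc (Suc n)) ` ?S" .
  moreover have "inj_on (insert (Suc (Suc n))) ?S"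
    by (rule inj_onI) (metis insert_ident last_notin mem_Collect_eq)
  ultimately have "qcount_incl (Suc (Suc n)) r d = card ?S"
    unfolding qcount_incl_def by (simp add: card_image)
  also have "\<dots> = (if r = 0 then 0 else qcount n (r - 1) d)"
    unfolding qcount_def by (cases r) auto
  finally show ?thesis .
qed

lemma indep_path_0: "indep_path 0 = {{}}"
  by (auto simp: indep_path_def)

lemma indep_path_1: "indep_path 1 = {{}, {1}}"
  by (auto simp: indep_path_def)

lemma qcount_excl_0: "qcount_excl 0 r d = (if r = 0 \<and> d = 0 then 1 else 0)"
proof -
  have "{A \<in> indep_path 0. card A = r \<and> int (outdeg 0 A) = d \<and> 0 \<notin> A}
      = (if r = 0 \<and> d = 0 then {{}} else {})"
    by (auto simp: indep_path_0 outdeg_def)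
  thus ?thesis
    by (simp add: qcount_excl_def)
qed

lemma qcount_incl_0: "qcount_incl 0 r d = 0"
  by (simp add: qcount_incl_def indep_path_0)

lemma qcount_incl_1: "qcount_incl 1 r d = (if r = 1 \<and> d = 0 then 1 else 0)"
proof -
  have "outdeg 1 {1} = 0"
    by (auto simp: outdeg_def)
  hence "{A \<in> indep_path 1. card A = r \<and> int (outdeg 1 A) = d \<and> 1 \<in> A}
      = (if r = 1 \<and> d = 0 then {{1}} else {})"
    unfolding indep_path_1 by auto
  thus ?thesis
    by (simp add: qcount_incl_def)
qed

definition binom :: "int \<Rightarrow> int \<Rightarrow> nat" where
  "binom a b = (if a < 0 \<or> b < 0 then 0 else nat a choose nat b)"

lemma binom_eq_0 [simp]: "a < 0 \<or> b < 0 \<Longrightarrow> binom a b = 0"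
  by (auto simp: binom_def)

lemma binom_eq_0_above: "a < b \<Longrightarrow> binom a b = 0"
  by (simp add: binom_def)

lemma binom_0_right [simp]: "a \<ge> 0 \<Longrightarrow> binom a 0 = 1"
  by (simp add: binom_def)

lemma binom_0_left: "binom 0 b = (if b = 0 then 1 else 0)"
  by (auto simp: binom_def)

lemma binom_self: "a \<ge> 0 \<Longrightarrow> binom a a = 1"
  by (simp add: binom_def)

lemma binom_pascal:
  assumes "a \<ge> 1"
  shows "binom a b = binom (a - 1) (b - 1) + binom (a - 1) b"
proof -
  define A where "A = nat (a - 1)"
  have a: "a = int (Suc A)"
    using assms by (simp add: A_def)
  consider "b < 0" | "b = 0" | "b \<ge> 1"
    by linarith
  thus ?thesis
  proof cases
    case 3
    define B where "B = nat (b - 1)"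
    have b: "b = int (Suc B)"
      using 3 by (simp add: B_def)
    show ?thesis
      by (simp add: binom_def a b nat_add_distrib)
  qed (auto simp: binom_def a)
qed

lemma binom_absorption:
  assumes "a \<ge> 0"
  shows "int (binom a (k + 1)) * (k + 1) = int (binom a k) * (a - k)"
proof (cases "k < 0")
  case True
  thus ?thesis
    by (cases "k = -1") auto
next
  case False
  then obtain A K where AK: "a = int A" "k = int K"
    using assms by (metis nonneg_eq_int not_less)
  have "Suc K * (A choose Suc K) = (A - K) * (A choose K)"
    by (simp only: binomial_absorption binomial_absorb_comp)
  hence "int (Suc K * (A choose Suc K)) = int ((A - K) * (A choose K))"
    by (rule arg_cong)
  thus ?thesis
    by (cases "K \<le> A") (auto simp: AK binom_def of_nat_diff nat_add_distrib algebra_simps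
        binomial_eq_0)
qed

text \<open>\<open>spare n r = n + 1 - 2r\<close> is the number of vertices of \<open>P\<^sub>n\<close> left over by an independent
  \<open>r\<close>-set once each of its vertices but the last is paired with its right neighbour.\<close>

definition spare :: "nat \<Rightarrow> nat \<Rightarrow> int" where
  "spare n r = int n + 1 - 2 * int r"

definition qcount_excl_closed :: "nat \<Rightarrow> nat \<Rightarrow> int \<Rightarrow> nat" where
  "qcount_excl_closed n r d = binom (int r) (spare n r - d - 1) * binom (spare n r - 1) d"

definition qcount_incl_closed :: "nat \<Rightarrow> nat \<Rightarrow> int \<Rightarrow> nat" where
  "qcount_incl_closed n r d =
    (if spare n r = 0 then (if d = 0 then 1 else 0)
     else binom (int r) (spare n r - d) * binom (spare n r - 1) d)"

lemma qcount_excl_closed_Suc: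
  "qcount_excl_closed (Suc n) r d = qcount_excl_closed n r (d - 1) + qcount_incl_closed n r d"
proof -
  define m where "m = spare n r"
  have "spare (Suc n) r = m + 1"
    by (simp add: m_def spare_def)
  hence lhs: "qcount_excl_closed (Suc n) r d = binom (int r) (m - d) * binom m d"
    by (simp add: qcount_excl_closed_def)
  have excl: "qcount_excl_closed n r (d - 1) = binom (int r) (m - d) * binom (m - 1) (d - 1)"
    by (simp add: qcount_excl_closed_def m_def)
  have incl: "qcount_incl_closed n r d =
      (if m = 0 then (if d = 0 then 1 else 0) else binom (int r) (m - d) * binom (m - 1) d)"
    by (simp add: qcount_incl_closed_def m_def)
  consider "m < 0" | "m = 0" | "m \<ge> 1"
    by linarith
  thus ?thesis
  proof cases
    case 3
    thus ?thesis
      using binom_pascal[OF 3, of d] by (simp add: lhs excl incl algebra_simps)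
  qed (auto simp: lhs excl incl binom_0_left)
qed

lemma qcount_incl_closed_Suc_Suc:
  "qcount_incl_closed (Suc (Suc n)) r d =
    (if r = 0 then 0 else qcount_excl_closed n (r - 1) d + qcount_incl_closed n (r - 1) d)"
proof (cases r)
  case 0
  have "binom (int n + 2) (int n + 3) = 0"
    by (simp add: binom_eq_0_above)
  thus ?thesis
    using 0 by (auto simp: qcount_incl_closed_def spare_def binom_0_left algebra_simps)
next
  case (Suc r')
  define m where "m = spare n r'"
  have "spare (Suc (Suc n)) r = m" "spare n (r - 1) = m"
    by (simp_all add: Suc m_def spare_def)
  thus ?thesis
    using Suc binom_pascal[of "int r' + 1" "m - d"]
    by (simp add: qcount_excl_closed_def qcount_incl_closed_def algebra_simps)
qed

lemma qcount_excl_closed_0: "qcount_excl_closed 0 r d = (if r = 0 \<and> d = 0 then 1 else 0)"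
  by (cases r) (auto simp: qcount_excl_closed_def spare_def binom_0_left)

lemma qcount_incl_closed_0: "qcount_incl_closed 0 r d = 0"
  by (cases r) (auto simp: qcount_incl_closed_def spare_def binom_0_left)

lemma qcount_incl_closed_1: "qcount_incl_closed 1 r d = (if r = 1 \<and> d = 0 then 1 else 0)"
proof (cases "r = 0")
  case True
  have "binom 1 2 = 0"
    by (simp add: binom_eq_0_above)
  thus ?thesis
    using True by (auto simp: qcount_incl_closed_def spare_def binom_0_left)
qed (auto simp: qcount_incl_closed_def spare_def)

lemma qcount_excl_incl_eq_closed:
  "qcount_excl n r d = qcount_excl_closed n r d \<and> qcount_incl n r d = qcount_incl_closed n r d"
proof (induction n arbitrary: r d rule: less_induct)
  case (less n)
  consider "n = 0" | "n = 1" | m where "n = Suc (Suc m)"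
    by (metis One_nat_def not0_implies_Suc)
  thus ?case
  proof cases
    case 1
    thus ?thesis
      by (simp add: qcount_excl_0 qcount_incl_0 qcount_excl_closed_0 qcount_incl_closed_0)
  next
    case 2
    have "qcount_excl 1 r d = qcount_excl_closed 1 r d"
      using qcount_excl_Suc[of 0] qcount_excl_closed_Suc[of 0]
      by (simp add: qcount_excl_0 qcount_incl_0 qcount_excl_closed_0 qcount_incl_closed_0)
    moreover have "qcount_incl 1 r d = qcount_incl_closed 1 r d"
      by (simp only: qcount_incl_1 qcount_incl_closed_1)
    ultimately show ?thesis
      using 2 by simp
  next
    case 3
    thus ?thesis
      using qcount_excl_Suc[of "Suc m"] qcount_excl_closed_Suc[of "Suc m"] less[of "Suc m"]
        qcount_incl_Suc_Suc[of m] qcount_incl_closed_Suc_Suc[of m] less[of m]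
      by (simp add: qcount_eq_excl_plus_incl)
  qed
qed

lemma qcount_spare_0: "spare n r = 0 \<Longrightarrow> qcount n r d = (if d = 0 then 1 else 0)"
  using qcount_excl_incl_eq_closed[of n r d]
  by (simp add: qcount_eq_excl_plus_incl qcount_excl_closed_def qcount_incl_closed_def)

lemma qcount_spare_pos:
  assumes "spare n r \<ge> 1"
  shows "qcount n r d = binom (int r + 1) (spare n r - d) * binom (spare n r - 1) d"
  using qcount_excl_incl_eq_closed[of n r d] assms binom_pascal[of "int r + 1" "spare n r - d"]
  by (simp add: qcount_eq_excl_plus_incl qcount_excl_closed_def qcount_incl_closed_def
      algebra_simps)

lemma binom_product_mode:
  fixes a b k :: int
  assumes "a \<ge> 1" "b \<ge> 0"
    and max: "\<And>j. binom a j * binom b (b + 1 - j) \<le> binom a k * binom b (b + 1 - k)"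
  shows "(k - 1) * (a + b + 2) \<le> a * (b + 1)" and "a * (b + 1) \<le> k * (a + b + 2)"
proof -
  define h where "h j = int (binom a j * binom b (b + 1 - j))" for j
  have h_max: "h j \<le> h k" for j
    unfolding h_def of_nat_mult[symmetric] of_nat_le_iff by (rule max)
  have ratio: "h (j + 1) * (j * (j + 1)) = h j * ((a - j) * (b + 1 - j))" for j
  proof -
    have "h (j + 1) * (j * (j + 1)) = (int (binom a (j + 1)) * (j + 1)) * (int (binom b (b - j)) * j)"
      by (simp add: h_def algebra_simps)
    also have "\<dots> = (int (binom a j) * (a - j)) * (int (binom b (b - j + 1)) * (b - j + 1))"
      using binom_absorption[of a j] binom_absorption[of b "b - j"] assms(1,2) by simp
    also have "\<dots> = h j * ((a - j) * (b + 1 - j))"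
      by (simp add: h_def algebra_simps)
    finally show ?thesis .
  qed
  have "h 1 = a"
    using assms(1,2) by (simp add: h_def binom_def binom_self)
  hence h_pos: "h k > 0"
    using h_max[of 1] assms(1) by linarith
  hence "binom a k \<noteq> 0" "binom b (b + 1 - k) \<noteq> 0"
    by (auto simp: h_def simp del: of_nat_mult)
  hence k: "1 \<le> k" "k \<le> a" "k \<le> b + 1"
    using binom_eq_0_above[of a k] binom_eq_0_above[of b "b + 1 - k"] binom_eq_0[of b "b + 1 - k"]
    by linarith+
  have "h k * ((k - 1) * k) = h (k - 1) * ((a + 1 - k) * (b + 2 - k))"
    using ratio[of "k - 1"] by (simp add: algebra_simps)
  also have "\<dots> \<le> h k * ((a + 1 - k) * (b + 2 - k))"
    using h_max[of "k - 1"] k by (intro mult_right_mono) auto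
  finally have "(k - 1) * k \<le> (a + 1 - k) * (b + 2 - k)"
    using h_pos by simp
  moreover have "(a + 1 - k) * (b + 2 - k) - (k - 1) * k = a * (b + 1) - (k - 1) * (a + b + 2)"
    by (simp add: algebra_simps)
  ultimately show "(k - 1) * (a + b + 2) \<le> a * (b + 1)"
    by linarith
  have "h k * ((a - k) * (b + 1 - k)) = h (k + 1) * (k * (k + 1))"
    using ratio[of k] by simp
  also have "\<dots> \<le> h k * (k * (k + 1))"
    using h_max[of "k + 1"] k by (intro mult_right_mono) auto
  finally have "(a - k) * (b + 1 - k) \<le> k * (k + 1)"
    using h_pos by simp
  moreover have "k * (k + 1) - (a - k) * (b + 1 - k) = k * (a + b + 2) - a * (b + 1)"
    by (simp add: algebra_simps)
  ultimately show "a * (b + 1) \<le> k * (a + b + 2)"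
    by linarith
qed

lemma qcount_maximiser_bounds:
  fixes n r :: nat and dstar :: int
  assumes "2 * r \<le> n + 1"
    and max: "\<forall>d. qcount n r d \<le> qcount n r dstar"
  defines "X \<equiv> (int n - 2 * int r)\<^sup>2 + 2 * int n - 5 * int r - 1"
    and "D \<equiv> int n - int r + 3"
  shows "X \<le> dstar * D" and "dstar * D \<le> X + D"
proof -
  define m where "m = spare n r"
  have X: "X = m\<^sup>2 - int r - 2" and D: "D = m + int r + 2"
    by (simp_all add: X_def D_def m_def spare_def power2_eq_square algebra_simps)
  have "m \<ge> 0"
    using assms(1) by (simp add: m_def spare_def)
  then consider "m = 0" | "m \<ge> 1"
    by linarith
  hence "X \<le> dstar * D \<and> dstar * D \<le> X + D"
  proof cases
    case 1
    hence "qcount n r d = (if d = 0 then 1 else 0)" for d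
      by (simp add: qcount_spare_0 m_def)
    hence "dstar = 0"
      using max[rule_format, of 0] by (auto split: if_splits)
    thus ?thesis
      by (simp add: X D 1)
  next
    case 2
    have "binom (int r + 1) j * binom (m - 1) (m - 1 + 1 - j)
        \<le> binom (int r + 1) (m - dstar) * binom (m - 1) (m - 1 + 1 - (m - dstar))" for j
      using max[rule_format, of "m - j"] 2 by (simp add: qcount_spare_pos m_def)
    from binom_product_mode[OF _ _ this] 2
    have "(m - dstar - 1) * (int r + m + 2) \<le> (int r + 1) * m"
      and "(int r + 1) * m \<le> (m - dstar) * (int r + m + 2)"
      by (simp_all add: algebra_simps)
    moreover have "dstar * D - X = (int r + 1) * m - (m - dstar - 1) * (int r + m + 2)"
      and "X + D - dstar * D = (m - dstar) * (int r + m + 2) - (int r + 1) * m"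
      by (simp_all add: X D power2_eq_square algebra_simps)
    ultimately show ?thesis
      by linarith
  qed
  thus "X \<le> dstar * D" and "dstar * D \<le> X + D"
    by simp_all
qed

lemma eq_ceiling_or_eq_plus_one:
  fixes x :: int and y :: real
  assumes "y \<le> of_int x" and "of_int x \<le> y + 1"
  shows "x = \<lceil>y\<rceil> \<or> of_int x = y + 1"
proof (cases "of_int x = y + 1")
  case False
  hence "of_int x - 1 < y"
    using assms(2) by linarith
  thus ?thesis
    using assms(1) by (simp add: ceiling_unique)
qed simp

theorem mainTheorem5:
  fixes n r :: nat and dstar :: int
  assumes "n \<ge> 1"
    and "real r \<le> real_of_int \<lceil>real n / 2\<rceil>"
    and "\<forall>d::int. qcount n r d \<le> qcount n r dstar"
  shows "dstar = \<lceil>((real n - 2 * real r)\<^sup>2 + 2 * real n - 5 * real r - 1) / (real n - real r + 3)\<rceil>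
         \<or> real_of_int dstar = ((real n - 2 * real r)\<^sup>2 + 2 * real n - 5 * real r - 1) / (real n - real r + 3) + 1"
proof -
  define X where "X = (int n - 2 * int r)\<^sup>2 + 2 * int n - 5 * int r - 1"
  define D where "D = int n - int r + 3"
  have "real_of_int \<lceil>real n / 2\<rceil> < real n / 2 + 1"
    by linarith
  hence "2 * r \<le> n + 1"
    using assms(2) by linarith
  have "X \<le> dstar * D" "dstar * D \<le> X + D"
    unfolding X_def D_def using qcount_maximiser_bounds[OF \<open>2 * r \<le> n + 1\<close> assms(3)] .
  moreover have "D > 0"
    using \<open>2 * r \<le> n + 1\<close> by (simp add: D_def)
  ultimately have "X / D \<le> dstar" "dstar \<le> X / D + 1"
    by (simp_all add: divide_le_eq le_divide_eq field_simps flip: of_int_mult of_int_add of_int_le_iff)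
  moreover have "((real n - 2 * real r)\<^sup>2 + 2 * real n - 5 * real r - 1) / (real n - real r + 3) = X / D"
    by (simp add: X_def D_def)
  ultimately show ?thesis
    using eq_ceiling_or_eq_plus_one[of "X / D" dstar] by simp
qed

end
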